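(* Let $(r_{i,j})_{i\ge 0,\, j\in\mathbb{Z}}$ be the Pascal rhombus, defined by $r_{0,0}=r_{1,-1}=r_{1,0}=r_{1,1}=1$, $r_{0,j}=0$ for $j\neq 0$, $r_{1,j}=0$ for $j\notin\{-1,0,1\}$, and $$r_{i,j}=r_{i-1,j-1}+r_{i-1,j}+r_{i-1,j+1}+r_{i-2,j}\quad (i\ge 2,\ j\in\mathbb{Z}).$$ For $n\ge 0$ and $j\in\mathbb{Z}$, let $g^{(2)}_{n,j}$ be the number of 2-generalized grand Motzkin paths of length $n$ and height $j$. Then $r_{n,j}=g^{(2)}_{n,j}$ for all $n\ge 0$, $j\in\mathbb{Z}$.
   Context: A 2-generalized grand Motzkin path of length $n$ is a lattice path in $\mathbb{Z}\times\mathbb{Z}$ starting at $(0,0)$ and ending at a point with $x$-coordinate $n$, using steps $U=(1,1)$, $D=(1,-1)$, $H=(1,0)$ and $H_2=(2,0)$, with no restriction of staying above the $x$-axis. Its height is its final $y$-coordinate. *)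

theory Defs
  imports Main
begin

fun rhombus :: "nat \<Rightarrow> int \<Rightarrow> nat" where
  "rhombus 0 j = (if j = 0 then 1 else 0)"
| "rhombus (Suc 0) j = (if j \<in> {-1, 0, 1} then 1 else 0)"
| "rhombus (Suc (Suc i)) j =
     rhombus (Suc i) (j - 1) + rhombus (Suc i) j + rhombus (Suc i) (j + 1) + rhombus i j"

datatype step = U | D | H | H2

fun step_dx :: "step \<Rightarrow> nat" where
  "step_dx U = 1" | "step_dx D = 1" | "step_dx H = 1" | "step_dx H2 = 2"

fun step_dy :: "step \<Rightarrow> int" where
  "step_dy U = 1" | "step_dy D = -1" | "step_dy H = 0" | "step_dy H2 = 0"

text \<open>A path from (0,0) is a list of steps; its length is its final x-coordinate,
  its height its final y-coordinate.\<close>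
definition path_length :: "step list \<Rightarrow> nat" where
  "path_length p = (\<Sum>s\<leftarrow>p. step_dx s)"

definition path_height :: "step list \<Rightarrow> int" where
  "path_height p = (\<Sum>s\<leftarrow>p. step_dy s)"

definition grand_motzkin2 :: "nat \<Rightarrow> int \<Rightarrow> nat" where
  "grand_motzkin2 n j = card {p. path_length p = n \<and> path_height p = j}"

end

theory Submission
  imports Defs
begin

text \<open>A path of length \<open>n > 0\<close> is its first step \<open>s\<close> followed by a path of length
  \<open>n - dx s\<close> and height \<open>j - dy s\<close>, and paths with different first steps are distinct.
  So the path counts obey the rhombus recurrence, the step \<open>H2\<close> accounting for the term
  \<open>r(i-2, j)\<close>, and they agree with the rhombus on the first two rows.\<close>

definition motzkin_paths :: "nat \<Rightarrow> int \<Rightarrow> step list set" where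
  "motzkin_paths n j = {p. path_length p = n \<and> path_height p = j}"

lemma path_length_Nil [simp]: "path_length [] = 0"
  and path_length_Cons [simp]: "path_length (s # p) = step_dx s + path_length p"
  by (simp_all add: path_length_def)

lemma path_height_Nil [simp]: "path_height [] = 0"
  and path_height_Cons [simp]: "path_height (s # p) = step_dy s + path_height p"
  by (simp_all add: path_height_def)

lemma step_in_all_steps: "s \<in> {U, D, H, H2}"
  by (cases s) simp_all

lemma finite_step_set: "finite (A :: step set)"
  using step_in_all_steps by (blast intro: finite_subset[of A "{U, D, H, H2}"])

lemma step_dx_pos: "step_dx s > 0"
  by (cases s) simp_all

lemma length_le_path_length: "length p \<le> path_length p"
proof (induction p)
  case (Cons s p)
  then show ?case using step_dx_pos[of s] by simp
qed simp

lemma path_length_eq_0_iff: "path_length p = 0 \<longleftrightarrow> p = []"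
  by (cases p) (simp_all add: step_dx_pos)

lemma finite_motzkin_paths: "finite (motzkin_paths n j)"
proof (rule finite_subset)
  show "motzkin_paths n j \<subseteq> {p. set p \<subseteq> {U, D, H, H2} \<and> length p \<le> n}"
    unfolding motzkin_paths_def using step_in_all_steps length_le_path_length by auto
  show "finite {p. set p \<subseteq> {U, D, H, H2} \<and> length p \<le> n}"
    by (rule finite_lists_length_le) simp
qed

lemma motzkin_paths_0: "motzkin_paths 0 j = (if j = 0 then {[]} else {})"
  by (auto simp: motzkin_paths_def path_length_eq_0_iff)

lemma Cons_mem_motzkin_paths_iff:
  "s # p \<in> motzkin_paths n j \<longleftrightarrow>
     step_dx s \<le> n \<and> p \<in> motzkin_paths (n - step_dx s) (j - step_dy s)"
  by (auto simp: motzkin_paths_def)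

lemma motzkin_paths_first_step:
  assumes "n > 0"
  shows "motzkin_paths n j =
    (\<Union>s\<in>{s. step_dx s \<le> n}. Cons s ` motzkin_paths (n - step_dx s) (j - step_dy s))"
proof (rule set_eqI)
  fix p
  show "p \<in> motzkin_paths n j \<longleftrightarrow>
    p \<in> (\<Union>s\<in>{s. step_dx s \<le> n}. Cons s ` motzkin_paths (n - step_dx s) (j - step_dy s))"
  proof (cases p)
    case Nil
    then show ?thesis using assms by (auto simp: motzkin_paths_def)
  next
    case (Cons s q)
    then show ?thesis by (auto simp: Cons_mem_motzkin_paths_iff)
  qed
qed

lemma card_UN_Cons_image:
  assumes "finite X" and "\<And>x. x \<in> X \<Longrightarrow> finite (F x)"
  shows "card (\<Union>x\<in>X. Cons x ` F x) = (\<Sum>x\<in>X. card (F x))"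
  using assms by (subst card_UN_disjoint) (auto simp: card_image)

lemma card_motzkin_paths_first_step:
  assumes "n > 0"
  shows "card (motzkin_paths n j) =
    (\<Sum>s\<in>{s. step_dx s \<le> n}. card (motzkin_paths (n - step_dx s) (j - step_dy s)))"
  unfolding motzkin_paths_first_step[OF assms]
  by (rule card_UN_Cons_image) (rule finite_step_set, rule finite_motzkin_paths)

lemma first_steps_Suc_0: "{s. step_dx s \<le> Suc 0} = {U, D, H}"
proof (rule set_eqI)
  fix s
  show "s \<in> {s. step_dx s \<le> Suc 0} \<longleftrightarrow> s \<in> {U, D, H}"
    by (cases s) simp_all
qed

lemma first_steps_Suc_Suc: "{s. step_dx s \<le> Suc (Suc i)} = {U, D, H, H2}"
proof (rule set_eqI)
  fix s
  show "s \<in> {s. step_dx s \<le> Suc (Suc i)} \<longleftrightarrow> s \<in> {U, D, H, H2}"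
    by (cases s) simp_all
qed

lemma card_motzkin_paths: "card (motzkin_paths n j) = rhombus n j"
proof (induction n j rule: rhombus.induct)
  case (1 j)
  show ?case by (simp add: motzkin_paths_0)
next
  case (2 j)
  show ?case
    by (simp add: card_motzkin_paths_first_step first_steps_Suc_0 motzkin_paths_0)
next
  case (3 i j)
  then show ?case
    by (simp add: card_motzkin_paths_first_step first_steps_Suc_Suc algebra_simps)
qed

theorem theorem2p3:
  fixes n :: nat and j :: int
  shows "rhombus n j = grand_motzkin2 n j"
  using card_motzkin_paths[of n j] by (simp add: grand_motzkin2_def motzkin_paths_def)

end
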